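(* Let ${\bf S}$ be any logic over $For$ (a consequence relation $\vdash_{\bf S}$) lying between ${\bf Km}$ and ${\bf T45m}$, i.e. $\Gamma\vdash_{\bf Km}\alpha$ implies $\Gamma\vdash_{\bf S}\alpha$, and $\Gamma\vdash_{\bf S}\alpha$ implies $\Gamma\vdash_{\bf T45m}\alpha$, for all $\Gamma\cup\{\alpha\}\subseteq For$. Then ${\bf S}$ is a conservative extension of classical propositional logic ${\bf PC}$: for every formula $\alpha$ built from propositional variables using only $\neg$ and $\to$, $\vdash_{\bf S}\alpha$ iff $\alpha$ is a classical tautology.
   Context: Formulas are built from a denumerable set of propositional variables by the unary connectives $\neg$, $\Box$ and the binary connective $\to$; $For$ is the set of all formulas. Abbreviations: $\Diamond\alpha:=\neg\Box\neg\alpha$, $\alpha\vee\beta:=\neg\alpha\to\beta$, $\alpha\wedge\beta:=\neg(\alpha\to\neg\beta)$. All Hilbert calculi below have as axioms all instances (over $For$) of the axiom schemas of a standard Hilbert calculus for classical propositional logic in the signature $\{\neg,\to\}$, plus the listed modal schemas, with modus ponens as the only rule; $\Gamma\vdash_{\bf L}\alpha$ means there is a derivation of $\alpha$ from $\Gamma$ in ${\bf L}$. ${\bf Km}$: (K') $\Diamond\alpha\to(\Box(\alpha\to\beta)\to(\Box\alpha\to\Box\beta))$; (K1') $\Diamond\neg\beta\to(\Box(\alpha\to\beta)\to(\Diamond\alpha\to\Diamond\beta))$; (K2') $\Diamond\alpha\to(\Diamond(\alpha\to\beta)\to(\Box\alpha\to\Diamond\beta))$; (M3') $(\Diamond\alpha\vee\Diamond\neg\alpha)\to(\Diamond\beta\to\Diamond(\alpha\to\beta))$;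 (M4') $\Diamond\neg\beta\to(\Diamond\neg\alpha\to\Diamond(\alpha\to\beta))$; (I1) $(\Box\alpha\wedge\Box\neg\alpha)\to(\Box(\alpha\to\beta)\wedge\Box\neg(\alpha\to\beta))$; (I2) $(\Box\beta\wedge\Box\neg\beta)\to(\Box(\alpha\to\beta)\wedge\Box\neg(\alpha\to\beta))$; (M1) $\neg\Diamond\alpha\to\Box(\alpha\to\beta)$; (M2) $\Box\beta\to\Box(\alpha\to\beta)$; (DN1) $\Box\alpha\to\Box\neg\neg\alpha$; (DN2) $\Box\neg\neg\alpha\to\Box\alpha$. ${\bf T45m}$: (K) $\Box(\alpha\to\beta)\to(\Box\alpha\to\Box\beta)$; (K1) $\Box(\alpha\to\beta)\to(\Diamond\alpha\to\Diamond\beta)$; (K2) $\Diamond(\alpha\to\beta)\to(\Box\alpha\to\Diamond\beta)$; (M1); (M2); (M3) $\Diamond\beta\to\Diamond(\alpha\to\beta)$; (M4) $\Diamond\neg\alpha\to\Diamond(\alpha\to\beta)$; (T) $\Box\alpha\to\alpha$; (DN1); (DN2); (4) $\Box\alpha\to\Box\Box\alpha$; (5) $\Diamond\Box\alpha\to\Box\alpha$. *)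

theory Defs
  imports Main
begin

datatype fm = Var nat | Neg fm | Imp fm fm | Box fm

definition Dia :: "fm \<Rightarrow> fm" where "Dia a = Neg (Box (Neg a))"
definition Or :: "fm \<Rightarrow> fm \<Rightarrow> fm" where "Or a b = Imp (Neg a) b"
definition And :: "fm \<Rightarrow> fm \<Rightarrow> fm" where "And a b = Neg (Imp a (Neg b))"

inductive pc_ax :: "fm \<Rightarrow> bool" where
  A1: "pc_ax (Imp a (Imp b a))"
| A2: "pc_ax (Imp (Imp a (Imp b c)) (Imp (Imp a b) (Imp a c)))"
| A3: "pc_ax (Imp (Imp (Neg a) (Neg b)) (Imp b a))"

inductive km_ax :: "fm \<Rightarrow> bool" where
  Kp:  "km_ax (Imp (Dia a) (Imp (Box (Imp a b)) (Imp (Box a) (Box b))))"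
| K1p: "km_ax (Imp (Dia (Neg b)) (Imp (Box (Imp a b)) (Imp (Dia a) (Dia b))))"
| K2p: "km_ax (Imp (Dia a) (Imp (Dia (Imp a b)) (Imp (Box a) (Dia b))))"
| M3p: "km_ax (Imp (Or (Dia a) (Dia (Neg a))) (Imp (Dia b) (Dia (Imp a b))))"
| M4p: "km_ax (Imp (Dia (Neg b)) (Imp (Dia (Neg a)) (Dia (Imp a b))))"
| I1:  "km_ax (Imp (And (Box a) (Box (Neg a))) (And (Box (Imp a b)) (Box (Neg (Imp a b)))))"
| I2:  "km_ax (Imp (And (Box b) (Box (Neg b))) (And (Box (Imp a b)) (Box (Neg (Imp a b)))))"
| M1:  "km_ax (Imp (Neg (Dia a)) (Box (Imp a b)))"
| M2:  "km_ax (Imp (Box b) (Box (Imp a b)))"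
| DN1: "km_ax (Imp (Box a) (Box (Neg (Neg a))))"
| DN2: "km_ax (Imp (Box (Neg (Neg a))) (Box a))"

inductive t45m_ax :: "fm \<Rightarrow> bool" where
  K:   "t45m_ax (Imp (Box (Imp a b)) (Imp (Box a) (Box b)))"
| K1:  "t45m_ax (Imp (Box (Imp a b)) (Imp (Dia a) (Dia b)))"
| K2:  "t45m_ax (Imp (Dia (Imp a b)) (Imp (Box a) (Dia b)))"
| M1:  "t45m_ax (Imp (Neg (Dia a)) (Box (Imp a b)))"
| M2:  "t45m_ax (Imp (Box b) (Box (Imp a b)))"
| M3:  "t45m_ax (Imp (Dia b) (Dia (Imp a b)))"
| M4:  "t45m_ax (Imp (Dia (Neg a)) (Dia (Imp a b)))"
| T:   "t45m_ax (Imp (Box a) a)"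
| DN1: "t45m_ax (Imp (Box a) (Box (Neg (Neg a))))"
| DN2: "t45m_ax (Imp (Box (Neg (Neg a))) (Box a))"
| Four: "t45m_ax (Imp (Box a) (Box (Box a)))"
| Five: "t45m_ax (Imp (Dia (Box a)) (Box a))"

inductive derives :: "(fm \<Rightarrow> bool) \<Rightarrow> fm set \<Rightarrow> fm \<Rightarrow> bool" for ax where
  prem: "a \<in> \<Gamma> \<Longrightarrow> derives ax \<Gamma> a"
| pc: "pc_ax a \<Longrightarrow> derives ax \<Gamma> a"
| modal: "ax a \<Longrightarrow> derives ax \<Gamma> a"
| mp: "derives ax \<Gamma> a \<Longrightarrow> derives ax \<Gamma> (Imp a b) \<Longrightarrow> derives ax \<Gamma> b"

abbreviation derives_Km :: "fm set \<Rightarrow> fm \<Rightarrow> bool" where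
  "derives_Km \<equiv> derives km_ax"
abbreviation derives_T45m :: "fm set \<Rightarrow> fm \<Rightarrow> bool" where
  "derives_T45m \<equiv> derives t45m_ax"

definition consequence_relation :: "(fm set \<Rightarrow> fm \<Rightarrow> bool) \<Rightarrow> bool" where
  "consequence_relation S \<longleftrightarrow>
     (\<forall>\<Gamma> a. a \<in> \<Gamma> \<longrightarrow> S \<Gamma> a) \<and>
     (\<forall>\<Gamma> \<Delta> a. S \<Gamma> a \<and> \<Gamma> \<subseteq> \<Delta> \<longrightarrow> S \<Delta> a) \<and>
     (\<forall>\<Gamma> \<Delta> a. (\<forall>b\<in>\<Delta>. S \<Gamma> b) \<and> S (\<Gamma> \<union> \<Delta>) a \<longrightarrow> S \<Gamma> a)"

fun box_free :: "fm \<Rightarrow> bool" where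
  "box_free (Var n) = True"
| "box_free (Neg a) = box_free a"
| "box_free (Imp a b) = (box_free a \<and> box_free b)"
| "box_free (Box a) = False"

text \<open>Classical two-valued evaluation (Box case irrelevant for box-free formulas).\<close>
fun eval :: "(nat \<Rightarrow> bool) \<Rightarrow> fm \<Rightarrow> bool" where
  "eval v (Var n) = v n"
| "eval v (Neg a) = (\<not> eval v a)"
| "eval v (Imp a b) = (eval v a \<longrightarrow> eval v b)"
| "eval v (Box a) = False"

definition tautology :: "fm \<Rightarrow> bool" where
  "tautology a \<longleftrightarrow> (\<forall>v. eval v a)"

end

theory Submission
  imports Defs
begin

text \<open>Every calculus in question extends the Lukasiewicz axioms with modus ponens, so Kalmar's
  completeness argument puts every classical tautology into Km, hence into S. Conversely,
  reading Box as the identity (the one-world reflexive frame) makes every axiom of T45m a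
  classical tautology, so every theorem of S, being a theorem of T45m, is valid under that
  reading; on box-free formulas this reading is ordinary two-valued evaluation.\<close>

fun eval_box_id :: "(nat \<Rightarrow> bool) \<Rightarrow> fm \<Rightarrow> bool" where
  "eval_box_id v (Var n) = v n"
| "eval_box_id v (Neg a) = (\<not> eval_box_id v a)"
| "eval_box_id v (Imp a b) = (eval_box_id v a \<longrightarrow> eval_box_id v b)"
| "eval_box_id v (Box a) = eval_box_id v a"

lemma eval_box_id_box_free: "box_free a \<Longrightarrow> eval_box_id v a = eval v a"
  by (induction a) auto

lemma derives_T45m_sound:
  assumes "derives_T45m \<Gamma> a" and "\<forall>b\<in>\<Gamma>. eval_box_id v b"
  shows "eval_box_id v a"
  using assms
proof (induction rule: derives.induct)
  case (pc a \<Gamma>)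
  then show ?case by (cases rule: pc_ax.cases) auto
next
  case (modal a \<Gamma>)
  then show ?case by (cases rule: t45m_ax.cases) (auto simp: Dia_def)
qed auto

lemma derives_mono: "derives ax \<Gamma> a \<Longrightarrow> \<Gamma> \<subseteq> \<Delta> \<Longrightarrow> derives ax \<Delta> a"
  by (induction rule: derives.induct) (auto intro: derives.intros)

lemma derives_mp: "derives ax \<Gamma> (Imp a b) \<Longrightarrow> derives ax \<Gamma> a \<Longrightarrow> derives ax \<Gamma> b"
  by (rule derives.mp)

lemma derives_A1: "derives ax \<Gamma> (Imp a (Imp b a))"
  by (intro derives.pc pc_ax.A1)

lemma derives_A2: "derives ax \<Gamma> (Imp (Imp a (Imp b c)) (Imp (Imp a b) (Imp a c)))"
  by (intro derives.pc pc_ax.A2)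

lemma derives_A3: "derives ax \<Gamma> (Imp (Imp (Neg a) (Neg b)) (Imp b a))"
  by (intro derives.pc pc_ax.A3)

lemma derives_imp_refl: "derives ax \<Gamma> (Imp a a)"
  using derives_mp[OF derives_mp[OF derives_A2 derives_A1] derives_A1[where b = a]] .

lemma deduction_theorem:
  assumes "derives ax (insert a \<Gamma>) b"
  shows "derives ax \<Gamma> (Imp a b)"
  using assms
proof (induction "insert a \<Gamma>" b rule: derives.induct)
  case (prem b)
  then show ?case
    using derives_imp_refl derives_mp[OF derives_A1 derives.prem] by blast
next
  case (pc b)
  then show ?case using derives_mp[OF derives_A1 derives.pc] by blast
next
  case (modal b)
  then show ?case using derives_mp[OF derives_A1 derives.modal] by blast
next
  case (mp b c)
  then show ?case using derives_mp[OF derives_mp[OF derives_A2]] by blast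
qed

lemma derives_insert_hyp: "derives ax (insert a \<Gamma>) a"
  by (simp add: derives.prem)

lemma derives_imp_trans:
  assumes "derives ax \<Gamma> (Imp a b)" and "derives ax \<Gamma> (Imp b c)"
  shows "derives ax \<Gamma> (Imp a c)"
proof (rule deduction_theorem)
  have "derives ax (insert a \<Gamma>) b"
    using derives_mp[OF derives_mono[OF assms(1)] derives_insert_hyp] by blast
  then show "derives ax (insert a \<Gamma>) c"
    using derives_mp[OF derives_mono[OF assms(2)]] by blast
qed

lemma derives_ex_falso: "derives ax \<Gamma> (Imp (Neg b) (Imp b c))"
proof (rule deduction_theorem)
  have "derives ax (insert (Neg b) \<Gamma>) (Imp (Neg c) (Neg b))"
    using derives_mp[OF derives_A1 derives_insert_hyp] .
  then show "derives ax (insert (Neg b) \<Gamma>) (Imp b c)"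
    using derives_mp[OF derives_A3] by blast
qed

lemma derives_dneg_elim: "derives ax \<Gamma> (Imp (Neg (Neg b)) b)"
proof (rule deduction_theorem)
  let ?\<Delta> = "insert (Neg (Neg b)) \<Gamma>"
  have "derives ax ?\<Delta> (Imp (Neg b) (Neg (Neg (Neg b))))"
    using derives_mp[OF derives_A3 derives_mp[OF derives_A1 derives_insert_hyp]] .
  then have "derives ax ?\<Delta> (Imp (Neg (Neg b)) b)"
    using derives_mp[OF derives_A3] by blast
  then show "derives ax ?\<Delta> b"
    using derives_mp derives_insert_hyp by blast
qed

lemma derives_dneg_intro: "derives ax \<Gamma> (Imp b (Neg (Neg b)))"
  using derives_mp[OF derives_A3 derives_dneg_elim] .

lemma derives_contrapos: "derives ax \<Gamma> (Imp (Imp b c) (Imp (Neg c) (Neg b)))"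
proof (rule deduction_theorem)
  let ?\<Delta> = "insert (Imp b c) \<Gamma>"
  have "derives ax ?\<Delta> (Imp (Neg (Neg b)) (Neg (Neg c)))"
    by (intro derives_imp_trans[OF derives_dneg_elim]
        derives_imp_trans[OF derives_insert_hyp derives_dneg_intro])
  then show "derives ax ?\<Delta> (Imp (Neg c) (Neg b))"
    using derives_mp[OF derives_A3] by blast
qed

lemma derives_neg_imp_intro: "derives ax \<Gamma> (Imp b (Imp (Neg c) (Neg (Imp b c))))"
proof (rule deduction_theorem)
  let ?\<Delta> = "insert b \<Gamma>"
  have "derives ax (insert (Imp b c) ?\<Delta>) c"
    by (rule derives_mp[OF derives_insert_hyp]) (simp add: derives.prem)
  then have "derives ax ?\<Delta> (Imp (Imp b c) c)"
    by (rule deduction_theorem)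
  then show "derives ax ?\<Delta> (Imp (Neg c) (Neg (Imp b c)))"
    using derives_mp[OF derives_contrapos] by blast
qed

lemma derives_cases: "derives ax \<Gamma> (Imp (Imp b c) (Imp (Imp (Neg b) c) c))"
proof (intro deduction_theorem)
  let ?\<Delta> = "insert (Imp (Neg b) c) (insert (Imp b c) \<Gamma>)"
  let ?\<Delta>' = "insert (Neg c) ?\<Delta>"
  have "derives ax ?\<Delta>' (Neg b)"
    by (rule derives_mp[OF derives_mp[OF derives_contrapos]]) (auto intro: derives.prem)
  moreover have "derives ax ?\<Delta>' (Neg (Neg b))"
    by (rule derives_mp[OF derives_mp[OF derives_contrapos]]) (auto intro: derives.prem)
  ultimately have "derives ax ?\<Delta>' (Neg (Imp c c))"
    using derives_mp[OF derives_mp[OF derives_ex_falso]] by blast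
  then have "derives ax ?\<Delta> (Imp (Neg c) (Neg (Imp c c)))"
    by (rule deduction_theorem)
  then show "derives ax ?\<Delta> c"
    using derives_mp[OF derives_mp[OF derives_A3] derives_imp_refl] by blast
qed

fun vars :: "fm \<Rightarrow> nat set" where
  "vars (Var n) = {n}"
| "vars (Neg a) = vars a"
| "vars (Imp a b) = vars a \<union> vars b"
| "vars (Box a) = vars a"

lemma finite_vars: "finite (vars a)"
  by (induction a) auto

definition literal :: "(nat \<Rightarrow> bool) \<Rightarrow> nat \<Rightarrow> fm" where
  "literal v n = (if v n then Var n else Neg (Var n))"

lemma kalmar_lemma:
  assumes "box_free a" and "vars a \<subseteq> X"
  shows "derives ax (literal v ` X) (if eval v a then a else Neg a)"
  using assms
proof (induction a)
  case (Var n)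
  then show ?case by (intro derives.prem) (auto simp: literal_def)
next
  case (Neg b)
  then show ?case using derives_mp[OF derives_dneg_intro] by auto
next
  case (Imp b c)
  then have b: "derives ax (literal v ` X) (if eval v b then b else Neg b)"
    and c: "derives ax (literal v ` X) (if eval v c then c else Neg c)"
    by auto
  consider "\<not> eval v b" | "eval v c" | "eval v b" "\<not> eval v c"
    by blast
  then show ?case
  proof cases
    case 1
    then show ?thesis using derives_mp[OF derives_ex_falso] b by auto
  next
    case 2
    then show ?thesis using derives_mp[OF derives_A1] c by auto
  next
    case 3
    then show ?thesis using derives_mp[OF derives_mp[OF derives_neg_imp_intro]] b c by auto
  qed
qed simp

lemma derives_from_all_literal_sets:
  assumes "finite X" and "\<And>v. derives ax (literal v ` X) a"
  shows "derives ax {} a"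
  using assms
proof (induction X rule: finite_induct)
  case empty
  then show ?case by simp
next
  case (insert n X)
  have "derives ax (literal v ` X) a" for v
  proof -
    have "literal (v(n := t)) ` insert n X = insert (literal (v(n := t)) n) (literal v ` X)" for t
      using insert.hyps(2) by (auto simp: literal_def)
    then have "derives ax (insert (literal (v(n := t)) n) (literal v ` X)) a" for t
      using insert.prems[of "v(n := t)"] by metis
    from this[of True] this[of False]
    have "derives ax (literal v ` X) (Imp (Var n) a)"
      and "derives ax (literal v ` X) (Imp (Neg (Var n)) a)"
      by (simp_all add: literal_def deduction_theorem)
    then show ?thesis
      using derives_mp[OF derives_mp[OF derives_cases]] by blast
  qed
  then show ?case by (rule insert.IH)
qed

theorem derives_tautology:
  assumes "box_free a" and "tautology a"
  shows "derives ax {} a"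
proof (rule derives_from_all_literal_sets[OF finite_vars])
  fix v
  show "derives ax (literal v ` vars a) a"
    using kalmar_lemma[OF assms(1) order_refl, of ax v] assms(2)
    by (simp add: tautology_def)
qed

theorem mainTheorem17:
  fixes S :: "fm set \<Rightarrow> fm \<Rightarrow> bool"
  assumes "consequence_relation S"
    and "\<And>\<Gamma> a. derives_Km \<Gamma> a \<Longrightarrow> S \<Gamma> a"
    and "\<And>\<Gamma> a. S \<Gamma> a \<Longrightarrow> derives_T45m \<Gamma> a"
  shows "\<forall>a. box_free a \<longrightarrow> (S {} a \<longleftrightarrow> tautology a)"
proof (intro allI impI iffI)
  fix a
  assume "box_free a"
  show "tautology a" if "S {} a"
  proof -
    have "derives_T45m {} a" using assms(3) that .
    then show ?thesis
      using derives_T45m_sound \<open>box_free a\<close>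
      by (auto simp: tautology_def eval_box_id_box_free[symmetric])
  qed
  show "S {} a" if "tautology a"
    using assms(2) derives_tautology \<open>box_free a\<close> that .
qed

end
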